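(* Let $\mathcal{S}$ be a nonempty semigroup such that $|\mathcal{S}\setminus E(\mathcal{S})|$ is finite, and let $T$ be an $\mathcal{S}$-valued sequence of length $|\mathcal{S}\setminus E(\mathcal{S})|$. Then $\prod(T)\cap E(\mathcal{S})=\emptyset$ if and only if $\mathcal{R}=\langle \mathrm{supp}(T)\rangle$ is a finite commutative semigroup with $\mathcal{S}\setminus\mathcal{R}\subseteq E(\mathcal{S})$, the universal semilattice $Y(\mathcal{R})$ is a chain, $x_1*x_2=x_1$ for all $x_1,x_2\in\mathcal{R}$ with $x_1\lneqq_{\mathcal{N}_{\mathcal{R}}} x_2$, and moreover: (i) each archimedean component of $\mathcal{R}$ is either a finite cyclic semigroup $\langle x\rangle$ with $x\in\mathrm{supp}(T)$ and $\mathcal{I}(x)\equiv 1\pmod{\mathcal{P}(x)}$, or an ideal extension of a nontrivial finite cyclic group $\langle x_2\rangle$ by a nontrivial finite cyclic nilsemigroup $\langle x_1\rangle$ with $x_1,x_2\in\mathrm{supp}(T)$ and with the partial homomorphism $\varphi^{\langle x_1\rangle}_{\langle x_2\rangle}$ trivial, i.e. $\varphi^{\langle x_1\rangle}_{\langle x_2\rangle}(x_1)=x_1*e_{\langle x_2\rangle}=e_{\langle x_2\rangle}$, where $e_{\langle x_2\rangle}$ is the identity element of the group $\langle x_2\rangle$; (ii) $\mathrm{v}_x(T)=\mathcal{I}(x)+\mathcal{P}(x)-2$ for each $x\in\mathrm{supp}(T)$.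
   Context: $(\mathcal{S},* )$ is a semigroup, $E(\mathcal{S})=\{e\in\mathcal{S}: e*e=e\}$. For a finite sequence $T$ of elements of $\mathcal{S}$: $\prod(T)$ is the set of all products of the terms of nonempty subsequences of $T$ taken in every possible order; $\mathrm{supp}(T)$ is the set of elements occurring in $T$; $\mathrm{v}_x(T)$ is the number of times $x$ occurs in $T$. $\langle X\rangle$ is the subsemigroup generated by $X$. For $x$ with $\langle x\rangle$ finite, the index $\mathcal{I}(x)$ is the least $r>0$ with $x^r=x^t$ for some positive $t\neq r$, and the period $\mathcal{P}(x)$ is the least $k>0$ with $x^{\mathcal{I}(x)+k}=x^{\mathcal{I}(x)}$. For a commutative semigroup $\mathcal{R}$: $a\leqq_{\mathcal{N}_{\mathcal{R}}} b$ means $a^m=b*c$ for some $c\in\mathcal{R}$ and integer $m>0$; $a\,\mathcal{N}_{\mathcal{R}}\,b$ means $a\leqq b$ and $b\leqq a$; $a\lneqq_{\mathcal{N}_{\mathcal{R}}} b$ means $a\leqq b$ but not $b\leqq a$. $\mathcal{N}_{\mathcal{R}}$ is a congruence, the quotient $Y(\mathcal{R})=\mathcal{R}/\mathcal{N}_{\mathcal{R}}$ is a semilattice (the universal semilattice), and its classes are the archimedean components of $\mathcal{R}$. A nilsemigroup is a semigroup with zero $0$ in which every element has some power equal to $0$. If $G$ is an ideal of a semigroup $B$ and $Q$ is the Rees quotient $B/G$ (collapsing $G$ to a zero), $B$ is called an ideal extension of $G$ by $Q$; when $B$ is a finite commutative archimedean semigroup that is an ideal extension of a group $G$ by a nilsemigroup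 $N$, the associated partial homomorphism $\varphi^N_G: N\setminus\{0_N\}=B\setminus G\to G$ is $a\mapsto a*e_G$, with $e_G$ the identity of $G$. *)

theory Defs
  imports Main
begin

(* The semigroup S is the whole type 'a of class semigroup_mult (operation * ). *)

definition Idem :: "'a::semigroup_mult set" where
  "Idem = {e. e * e = e}"

(* product of a nonempty list (semigroups have no unit) *)
fun sprod :: "'a::semigroup_mult list \<Rightarrow> 'a" where
  "sprod [] = undefined"
| "sprod [x] = x"
| "sprod (x # y # xs) = x * sprod (y # xs)"

(* positive powers x^n, n \<ge> 1 *)
definition pw :: "'a::semigroup_mult \<Rightarrow> nat \<Rightarrow> 'a" where
  "pw x n = sprod (replicate n x)"

(* \<Pi>(T): products of the terms of nonempty subsequences of T, taken in every order *)
definition Prods :: "'a::semigroup_mult list \<Rightarrow> 'a set" where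
  "Prods T = {sprod (map (\<lambda>i. T ! i) is) | is.
                 is \<noteq> [] \<and> distinct is \<and> set is \<subseteq> {..<length T}}"

inductive_set gen :: "'a::semigroup_mult set \<Rightarrow> 'a set" for X where
  gen_base: "x \<in> X \<Longrightarrow> x \<in> gen X"
| gen_mult: "a \<in> gen X \<Longrightarrow> b \<in> gen X \<Longrightarrow> a * b \<in> gen X"

definition idx :: "'a::semigroup_mult \<Rightarrow> nat" where
  "idx x = (LEAST r. r > 0 \<and> (\<exists>t>0. t \<noteq> r \<and> pw x r = pw x t))"

definition per :: "'a::semigroup_mult \<Rightarrow> nat" where
  "per x = (LEAST k. k > 0 \<and> pw x (idx x + k) = pw x (idx x))"

definition Nle :: "'a::semigroup_mult set \<Rightarrow> 'a \<Rightarrow> 'a \<Rightarrow> bool" where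
  "Nle R a b \<longleftrightarrow> (\<exists>c\<in>R. \<exists>m>0. pw a m = b * c)"

definition Neq :: "'a::semigroup_mult set \<Rightarrow> 'a \<Rightarrow> 'a \<Rightarrow> bool" where
  "Neq R a b \<longleftrightarrow> Nle R a b \<and> Nle R b a"

definition Nless :: "'a::semigroup_mult set \<Rightarrow> 'a \<Rightarrow> 'a \<Rightarrow> bool" where
  "Nless R a b \<longleftrightarrow> Nle R a b \<and> \<not> Nle R b a"

definition arch_comps :: "'a::semigroup_mult set \<Rightarrow> 'a set set" where
  "arch_comps R = {{b \<in> R. Neq R a b} | a. a \<in> R}"

(* the universal semilattice Y(R) = R/N_R is a chain: its (natural) order,
   induced by \<le>_N, is total *)
definition Y_chain :: "'a::semigroup_mult set \<Rightarrow> bool" where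
  "Y_chain R \<longleftrightarrow> (\<forall>a\<in>R. \<forall>b\<in>R. Nle R a b \<or> Nle R b a)"

definition group_with_id :: "'a::semigroup_mult set \<Rightarrow> 'a \<Rightarrow> bool" where
  "group_with_id G e \<longleftrightarrow> e \<in> G \<and> (\<forall>a\<in>G. \<forall>b\<in>G. a * b \<in> G)
     \<and> (\<forall>g\<in>G. e * g = g \<and> g * e = g)
     \<and> (\<forall>g\<in>G. \<exists>h\<in>G. g * h = e \<and> h * g = e)"

(* B is an ideal extension of the nontrivial finite cyclic group <x2> (identity e)
   by the nontrivial finite cyclic nilsemigroup B/<x2>, generated by the class of x1 *)
definition ideal_ext_cyclic :: "'a::semigroup_mult set \<Rightarrow> 'a \<Rightarrow> 'a \<Rightarrow> 'a \<Rightarrow> bool" where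
  "ideal_ext_cyclic B x1 x2 e \<longleftrightarrow>
     (let G = gen {x2} in
        finite B \<and> (\<forall>a\<in>B. \<forall>b\<in>B. a * b \<in> B)
      \<and> G \<subseteq> B \<and> (\<forall>b\<in>B. \<forall>g\<in>G. b * g \<in> G \<and> g * b \<in> G)
      \<and> group_with_id G e \<and> card G \<ge> 2
      \<and> x1 \<in> B - G \<and> B - G \<subseteq> gen {x1}
      \<and> (\<forall>b\<in>B. \<exists>n>0. pw b n \<in> G))"

end

theory Submission
  imports Defs "HOL-Combinatorics.List_Permutation"
begin

text \<open>Write \<open>N\<close> for the set of non-idempotents. If no subsequence product of \<open>T\<close> is idempotent,
  adding a term to a sub-multiset \<open>W\<close> of \<open>T\<close> always creates a new product: otherwise every power
  of that term would be a product over \<open>W\<close>, and some power is idempotent. All these products lie in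
  \<open>N\<close> and \<open>|T| = |N|\<close>, so every \<open>W\<close> has exactly \<open>|W|\<close> products. For two distinct terms this forces
  them to commute with one absorbing the other; a product of such pairwise absorbing terms is a
  power \<open>x ^ c\<close> of its lowest term with \<open>c \<le> v_x(T)\<close>, so the non-idempotents of \<open>\<langle>x\<rangle>\<close> are exactly
  \<open>x, \<dots>, x ^ v_x(T)\<close>. This gives (ii) and \<open>per x | idx x - 1\<close>. The semigroup \<open>R\<close> is then the union
  of the \<open>\<langle>x\<rangle>\<close>, its archimedean components are the classes of terms with a common idempotent
  power, and each class has at most two terms, giving (i).

  Conversely, the structural conditions again make distinct terms pairwise absorbing, and a
  subsequence product \<open>x ^ c\<close> with \<open>c \<le> v_x(T) = idx x + per x - 2\<close> is not idempotent because
  \<open>per x\<close> divides \<open>idx x - 1\<close>.\<close>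

section \<open>Powers and monogenic subsemigroups\<close>

lemma sprod_Cons: "xs \<noteq> [] \<Longrightarrow> sprod (x # xs) = x * sprod xs"
  by (cases xs) auto

lemma sprod_append: "xs \<noteq> [] \<Longrightarrow> ys \<noteq> [] \<Longrightarrow> sprod (xs @ ys) = sprod xs * sprod ys"
  by (induction xs rule: induct_list012) (auto simp: sprod_Cons mult.assoc)

lemma sprod_in_gen: "xs \<noteq> [] \<Longrightarrow> set xs \<subseteq> X \<Longrightarrow> sprod xs \<in> gen X"
  by (induction xs rule: induct_list012) (auto intro: gen.intros)

lemma pw_1 [simp]: "pw x (Suc 0) = x"
  by (simp add: pw_def)

lemma pw_add: "a > 0 \<Longrightarrow> b > 0 \<Longrightarrow> pw x (a + b) = pw x a * pw x b"
  unfolding pw_def by (simp add: replicate_add sprod_append)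

lemma pw_Suc: "k > 0 \<Longrightarrow> pw x (Suc k) = x * pw x k"
  using pw_add[of 1 k x] by simp

lemma pw_Suc_right: "k > 0 \<Longrightarrow> pw x (Suc k) = pw x k * x"
  using pw_add[of k 1 x] by simp

lemma pw_pw:
  assumes "a > 0" "b > 0"
  shows "pw (pw x a) b = pw x (a * b)"
  using assms(2) by (induction b rule: nat_induct_non_zero)
    (simp_all add: assms(1) pw_Suc pw_add[symmetric] add.commute)

lemma pw_commute_right:
  assumes "x * y = y * x" "a > 0"
  shows "pw x a * y = y * pw x a"
  using assms(2)
proof (induction a rule: nat_induct_non_zero)
  case (Suc n)
  have "pw x (Suc n) * y = x * (pw x n * y)" using Suc by (simp add: pw_Suc mult.assoc)
  also have "\<dots> = (x * y) * pw x n" using Suc by (simp add: mult.assoc)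
  also have "\<dots> = y * pw x (Suc n)" using Suc assms by (simp add: pw_Suc mult.assoc)
  finally show ?case .
qed (simp add: assms)

lemma pw_commute:
  assumes "x * y = y * x" "a > 0" "b > 0"
  shows "pw x a * pw y b = pw y b * pw x a"
  using assms(3)
proof (induction b rule: nat_induct_non_zero)
  case (Suc n)
  have "pw x a * pw y (Suc n) = (pw x a * y) * pw y n" using Suc by (simp add: pw_Suc mult.assoc)
  also have "\<dots> = y * (pw x a * pw y n)" using pw_commute_right[OF assms(1,2)] by (simp add: mult.assoc)
  also have "\<dots> = pw y (Suc n) * pw x a" using Suc by (simp add: pw_Suc mult.assoc)
  finally show ?case .
qed (simp add: pw_commute_right assms)

lemma pw_mult_distrib:
  assumes "x * y = y * x" "k > 0"
  shows "pw (x * y) k = pw x k * pw y k"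
  using assms(2)
proof (induction k rule: nat_induct_non_zero)
  case (Suc n)
  have "pw (x * y) (Suc n) = x * (y * pw x n) * pw y n"
    using Suc by (simp add: pw_Suc mult.assoc)
  also have "\<dots> = x * (pw x n * y) * pw y n"
    using pw_commute_right[OF assms(1) Suc(1)] by simp
  also have "\<dots> = pw x (Suc n) * pw y (Suc n)"
    using Suc by (simp add: pw_Suc mult.assoc)
  finally show ?case .
qed simp

lemma mult_pw_absorb_right:
  assumes "x * y = x" "b > 0"
  shows "x * pw y b = x"
  using assms(2) by (induction b rule: nat_induct_non_zero)
    (simp_all add: assms(1) pw_Suc_right flip: mult.assoc)

lemma mult_pw_absorb_left:
  assumes "x * y = y" "b > 0"
  shows "x * pw y b = pw y b"
  using assms(2) by (induction b rule: nat_induct_non_zero)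
    (simp_all add: assms(1) pw_Suc flip: mult.assoc)

lemma pw_mult_pw_absorb_right:
  assumes "x * y = x" "a > 0" "b > 0"
  shows "pw x a * pw y b = pw x a"
  using assms(2) by (induction a rule: nat_induct_non_zero)
    (simp_all add: mult_pw_absorb_right[OF assms(1,3)] pw_Suc_right mult.assoc)

lemma gen_singleton: "gen {x} = {pw x k | k. k > 0}"
proof (intro equalityI subsetI)
  fix y assume "y \<in> gen {x}"
  then show "y \<in> {pw x k | k. k > 0}"
  proof (induction rule: gen.induct)
    case (gen_mult a b)
    then obtain i j where "a = pw x i" "b = pw x j" "i > 0" "j > 0" by auto
    then show ?case by (auto simp: pw_add[symmetric] intro!: exI[of _ "i + j"])
  qed (auto intro: exI[of _ 1])
next
  fix y assume "y \<in> {pw x k | k. k > 0}"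
  then obtain k where "y = pw x k" "k > 0" by auto
  moreover have "pw x k \<in> gen {x}" if "k > 0" for k
    using that by (induction k rule: nat_induct_non_zero) (auto simp: pw_Suc intro: gen.intros)
  ultimately show "y \<in> gen {x}" by simp
qed

lemma gen_mono: "X \<subseteq> Y \<Longrightarrow> gen X \<subseteq> gen Y"
proof
  show "a \<in> gen Y" if "X \<subseteq> Y" "a \<in> gen X" for a
    using that(2) by induction (use that(1) in \<open>auto intro: gen.intros\<close>)
qed

lemma pw_in_closed:
  assumes "\<forall>a\<in>R. \<forall>b\<in>R. a * b \<in> R" "a \<in> R" "k > 0"
  shows "pw a k \<in> R"
  using assms(3) by (induction k rule: nat_induct_non_zero) (simp_all add: assms(1,2) pw_Suc)

lemma pw_in_gen: "x \<in> gen X \<Longrightarrow> k > 0 \<Longrightarrow> pw x k \<in> gen X"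
  by (rule pw_in_closed) (auto intro: gen.intros)

definition periodic :: "'a::semigroup_mult \<Rightarrow> bool" where
  "periodic x \<longleftrightarrow> (\<exists>r>0. \<exists>t>0. t \<noteq> r \<and> pw x r = pw x t)"

lemma idx_le: "r > 0 \<Longrightarrow> t > 0 \<Longrightarrow> t \<noteq> r \<Longrightarrow> pw x r = pw x t \<Longrightarrow> idx x \<le> r"
  unfolding idx_def by (rule Least_le) auto

lemma
  assumes "periodic x"
  shows idx_pos: "idx x > 0"
    and pw_idx_repeats: "\<exists>t>0. t \<noteq> idx x \<and> pw x (idx x) = pw x t"
proof -
  have "\<exists>r. r > 0 \<and> (\<exists>t>0. t \<noteq> r \<and> pw x r = pw x t)"
    using assms periodic_def by auto
  then have "idx x > 0 \<and> (\<exists>t>0. t \<noteq> idx x \<and> pw x (idx x) = pw x t)"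
    unfolding idx_def by (rule LeastI_ex)
  then show "idx x > 0" "\<exists>t>0. t \<noteq> idx x \<and> pw x (idx x) = pw x t" by auto
qed

lemma per_le: "k > 0 \<Longrightarrow> pw x (idx x + k) = pw x (idx x) \<Longrightarrow> per x \<le> k"
  unfolding per_def by (rule Least_le) auto

lemma
  assumes "periodic x"
  shows per_pos: "per x > 0"
    and pw_idx_add_per: "pw x (idx x + per x) = pw x (idx x)"
proof -
  obtain t where t: "t > 0" "t \<noteq> idx x" "pw x (idx x) = pw x t"
    using pw_idx_repeats[OF assms] by auto
  have "idx x < t"
    using idx_le[of t "idx x" x] t idx_pos[OF assms] by auto
  then have "\<exists>k. k > 0 \<and> pw x (idx x + k) = pw x (idx x)"
    using t by (intro exI[of _ "t - idx x"]) auto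
  then have "per x > 0 \<and> pw x (idx x + per x) = pw x (idx x)"
    unfolding per_def by (rule LeastI_ex)
  then show "per x > 0" "pw x (idx x + per x) = pw x (idx x)" by auto
qed

lemma pw_add_per:
  assumes "periodic x" "idx x \<le> k"
  shows "pw x (k + per x) = pw x k"
proof (cases "k = idx x")
  case False
  then have k: "k = idx x + (k - idx x)" "k - idx x > 0" using assms(2) by auto
  have "pw x (k + per x) = pw x (idx x + per x) * pw x (k - idx x)"
    using k pw_add[of "idx x + per x" "k - idx x" x] idx_pos[OF assms(1)]
    by (simp add: algebra_simps)
  also have "\<dots> = pw x k"
    using k pw_idx_add_per[OF assms(1)] pw_add[of "idx x" "k - idx x" x] idx_pos[OF assms(1)]
    by simp
  finally show ?thesis .
qed (use pw_idx_add_per[OF assms(1)] in simp)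

lemma pw_add_mult_per:
  assumes "periodic x" "idx x \<le> k"
  shows "pw x (k + q * per x) = pw x k"
proof (induction q)
  case (Suc q)
  have "pw x (k + Suc q * per x) = pw x ((k + q * per x) + per x)"
    by (simp add: algebra_simps)
  with Suc show ?case using pw_add_per[OF assms(1)] assms(2) by simp
qed simp

lemma per_dvd:
  assumes "periodic x" "pw x (idx x + d) = pw x (idx x)"
  shows "per x dvd d"
proof (rule ccontr)
  assume "\<not> per x dvd d"
  then have "d mod per x > 0" by (simp add: dvd_eq_mod_eq_0)
  moreover have "pw x (idx x + d mod per x) = pw x (idx x)"
    using pw_add_mult_per[OF assms(1), of "idx x + d mod per x" "d div per x"] assms(2)
    by (simp add: add.assoc)
  ultimately have "per x \<le> d mod per x" by (rule per_le)
  then show False using per_pos[OF assms(1)] by (meson mod_less_divisor not_le)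
qed

text \<open>An equation between two powers beyond the index can be shifted down to the
  index by multiplying with a power that completes a multiple of the period.\<close>

lemma pw_idx_add_eq:
  assumes "periodic x" "idx x \<le> r" "pw x (r + d) = pw x r"
  shows "pw x (idx x + d) = pw x (idx x)"
proof -
  define c where "c = idx x + (r * per x - r)"
  have r_le: "r \<le> r * per x" using per_pos[OF assms(1)] by simp
  have rc: "r + c = idx x + r * per x" unfolding c_def using r_le by linarith
  have "c > 0" unfolding c_def using idx_pos[OF assms(1)] by simp
  moreover have "r > 0" using assms(2) idx_pos[OF assms(1)] by simp
  ultimately have "pw x (r + c) = pw x ((r + d) + c)"
    using assms(3) pw_add[of r c x] pw_add[of "r + d" c x] by simp
  moreover have "(r + d) + c = (idx x + d) + r * per x" using rc by simp
  ultimately have "pw x (idx x + r * per x) = pw x ((idx x + d) + r * per x)"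
    using rc by metis
  then show ?thesis
    using pw_add_mult_per[OF assms(1), of "idx x"] pw_add_mult_per[OF assms(1), of "idx x + d"]
    by simp
qed

lemma pw_eq_pwD:
  assumes "periodic x" "r > 0" "s > 0" "pw x r = pw x s" "r \<noteq> s"
  shows "idx x \<le> r \<and> idx x \<le> s \<and> r mod per x = s mod per x"
proof -
  have shift: "r mod per x = s mod per x" if "r < s" "idx x \<le> r" "pw x r = pw x s" for r s
  proof -
    have "per x dvd s - r"
      using that pw_idx_add_eq[OF assms(1) that(2), of "s - r"] per_dvd[OF assms(1)] by simp
    then show ?thesis using that(1) mod_eq_dvd_iff_nat[of r s "per x"] by simp
  qed
  have "idx x \<le> r" "idx x \<le> s" using idx_le[of r s x] idx_le[of s r x] assms by auto
  moreover from this have "r mod per x = s mod per x"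
    using shift[of r s] shift[of s r] assms(4,5) by (cases "r < s") auto
  ultimately show ?thesis by simp
qed

lemma pw_eq_iff:
  assumes "periodic x" "r > 0" "s > 0"
  shows "pw x r = pw x s \<longleftrightarrow> r = s \<or> (idx x \<le> r \<and> idx x \<le> s \<and> r mod per x = s mod per x)"
proof
  assume "r = s \<or> (idx x \<le> r \<and> idx x \<le> s \<and> r mod per x = s mod per x)"
  moreover have "pw x r = pw x s" if "r \<le> s" "idx x \<le> r" "r mod per x = s mod per x" for r s
  proof -
    have "per x dvd s - r" using that mod_eq_dvd_iff_nat[of r s "per x"] by simp
    then obtain q where "s - r = q * per x" by (metis dvd_def mult.commute)
    then have "s = r + q * per x" using that(1) by simp
    then show ?thesis using pw_add_mult_per[OF assms(1) that(2)] by simp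
  qed
  ultimately show "pw x r = pw x s"
    by (cases "r \<le> s") (auto, metis nat_le_linear)
qed (use pw_eq_pwD[OF assms] in auto)

lemma pw_idem_iff:
  assumes "periodic x" "k > 0"
  shows "pw x k * pw x k = pw x k \<longleftrightarrow> idx x \<le> k \<and> per x dvd k"
proof -
  have "pw x k * pw x k = pw x k \<longleftrightarrow> pw x (k + k) = pw x k"
    using pw_add[of k k x] assms(2) by simp
  also have "\<dots> \<longleftrightarrow> idx x \<le> k \<and> per x dvd k"
    using pw_eq_iff[OF assms(1), of "k + k" k] assms(2) mod_eq_dvd_iff_nat[of k "k + k" "per x"]
    by auto
  finally show ?thesis .
qed

lemma periodicI_finite:
  assumes "finite F" "\<And>k. k > 0 \<Longrightarrow> pw x k \<in> F"
  shows "periodic x"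
proof (rule ccontr)
  assume "\<not> periodic x"
  then have "inj_on (pw x) {0<..}"
    unfolding periodic_def by (intro inj_onI) blast
  moreover have "pw x ` {0<..} \<subseteq> F" using assms(2) by auto
  ultimately have "finite ({0<..} :: nat set)"
    using assms(1) finite_imageD finite_subset by metis
  then show False using infinite_Ioi[of "0::nat"] by simp
qed

lemma pw_2_idem: "x \<in> Idem \<Longrightarrow> pw x 2 = pw x 1"
  using pw_add[of 1 1 x] unfolding Idem_def by (simp add: numeral_2_eq_2)

lemma periodic_if_idem:
  assumes "x \<in> Idem"
  shows "periodic x"
  unfolding periodic_def
  using pw_2_idem[OF assms] by (intro exI[of _ 1] conjI exI[of _ 2]) auto

lemma
  assumes "x \<in> Idem"
  shows idx_idem: "idx x = 1" and per_idem: "per x = 1"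
proof -
  have xx: "pw x 2 = pw x 1" using pw_2_idem[OF assms] .
  have "idx x \<le> 1" using idx_le[of 1 2 x] xx by simp
  then show idx: "idx x = 1" using idx_pos[OF periodic_if_idem[OF assms]] by simp
  have "per x \<le> 1" using per_le[of 1 x] xx idx by (simp add: numeral_2_eq_2)
  then show "per x = 1" using per_pos[OF periodic_if_idem[OF assms]] by simp
qed

lemma gen_singleton_periodic:
  assumes "periodic x"
  shows "gen {x} = pw x ` {1..idx x + per x - 1}"
proof -
  have "pw x k \<in> pw x ` {1..idx x + per x - 1}" if "k > 0" for k
  proof (cases "k \<le> idx x + per x - 1")
    case False
    define j where "j = idx x + (k - idx x) mod per x"
    have "k = j + ((k - idx x) div per x) * per x" unfolding j_def using False by simp
    moreover have "pw x (j + q * per x) = pw x j" for q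
      using pw_add_mult_per[OF assms, of j] unfolding j_def by simp
    ultimately have "pw x k = pw x j" by metis
    moreover have "j \<in> {1..idx x + per x - 1}"
      unfolding j_def using idx_pos[OF assms] mod_less_divisor[OF per_pos[OF assms], of "k - idx x"]
      by simp
    ultimately show ?thesis by blast
  qed (use that in auto)
  then show ?thesis unfolding gen_singleton by auto
qed

lemma finite_gen_singleton: "periodic x \<Longrightarrow> finite (gen {x})"
  by (simp add: gen_singleton_periodic)

lemma inj_on_pw:
  assumes "periodic x"
  shows "inj_on (pw x) {1..idx x + per x - 1}"
proof (rule inj_onI, rule ccontr)
  fix r s assume rs: "r \<in> {1..idx x + per x - 1}" "s \<in> {1..idx x + per x - 1}"
    "pw x r = pw x s" "r \<noteq> s"
  then have "idx x \<le> r" "idx x \<le> s" "r mod per x = s mod per x"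
    using pw_eq_pwD[OF assms, of r s] by auto
  moreover have False if "r < s" "idx x \<le> r" "s \<le> idx x + per x - 1"
    "r mod per x = s mod per x" for r s
  proof -
    have "per x dvd s - r" using that mod_eq_dvd_iff_nat[of r s "per x"] by simp
    moreover have "0 < s - r" "s - r < per x" using that by auto
    ultimately show False using nat_dvd_not_less by blast
  qed
  ultimately show False using rs by (metis atLeastAtMost_iff linorder_neqE_nat)
qed

lemma card_gen_singleton: "periodic x \<Longrightarrow> card (gen {x}) = idx x + per x - 1"
  unfolding gen_singleton_periodic using card_image[OF inj_on_pw] by simp

definition idpow :: "'a::semigroup_mult \<Rightarrow> 'a" where
  "idpow x = pw x (idx x * per x)"

lemma idpow_pos: "periodic x \<Longrightarrow> idx x * per x > 0"
  by (simp add: idx_pos per_pos)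

lemma pw_eq_idpow:
  assumes "periodic x" "q > 0" "idx x \<le> q" "per x dvd q"
  shows "pw x q = idpow x"
  unfolding idpow_def using assms idpow_pos[OF assms(1)] idx_pos[OF assms(1)]
  by (subst pw_eq_iff) (auto simp: dvd_eq_mod_eq_0)

lemma
  assumes "periodic x"
  shows idpow_in_gen: "idpow x \<in> gen {x}"
    and idpow_idem: "idpow x \<in> Idem"
  using idpow_pos[OF assms] pw_idem_iff[OF assms, of "idx x * per x"] per_pos[OF assms]
  unfolding idpow_def gen_singleton Idem_def by auto

lemma idem_in_gen_singleton:
  assumes "periodic x" "y \<in> gen {x}" "y \<in> Idem"
  shows "y = idpow x"
proof -
  obtain k where k: "y = pw x k" "k > 0" using assms(2) unfolding gen_singleton by auto
  then have "idx x \<le> k" "per x dvd k"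
    using pw_idem_iff[OF assms(1) k(2)] assms(3) unfolding Idem_def by auto
  then show ?thesis using pw_eq_idpow[OF assms(1) k(2)] k(1) by simp
qed

lemma idpow_gen_singleton:
  assumes "periodic x" "b \<in> gen {x}"
  shows "idpow b = idpow x"
proof -
  have powers: "pw b k \<in> gen {x}" if "k > 0" for k using pw_in_gen[OF assms(2) that] .
  have b: "periodic b" by (rule periodicI_finite[OF finite_gen_singleton[OF assms(1)] powers])
  have "idpow b \<in> gen {x}"
    using powers idpow_pos[OF b] unfolding idpow_def by simp
  then show ?thesis using idem_in_gen_singleton[OF assms(1)] idpow_idem[OF b] by simp
qed

lemma card_gen_singleton_Diff_Idem:
  assumes "periodic x"
  shows "card (gen {x} - Idem) = idx x + per x - 2"
proof -
  have "gen {x} - Idem = gen {x} - {idpow x}"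
    using idpow_idem[OF assms] idem_in_gen_singleton[OF assms] by blast
  then show ?thesis
    using idpow_in_gen[OF assms] finite_gen_singleton[OF assms] card_gen_singleton[OF assms]
    by simp
qed

text \<open>The powers \<open>x, \<dots>, x ^ (idx x + per x - 2)\<close> are all non-idempotent iff the unique
  idempotent of \<open>\<langle>x\<rangle>\<close> is the last new power \<open>x ^ (idx x + per x - 1)\<close>, i.e. iff
  \<open>per x\<close> divides \<open>idx x - 1\<close>.\<close>

lemma initial_powers_nonidem_iff:
  assumes "periodic x"
  shows "(\<forall>k\<in>{1..idx x + per x - 2}. pw x k \<notin> Idem) \<longleftrightarrow> idx x mod per x = 1 mod per x"
proof -
  have I: "idx x > 0" and P: "per x > 0" using idx_pos[OF assms] per_pos[OF assms] by auto
  have idem_iff: "pw x k \<in> Idem \<longleftrightarrow> idx x \<le> k \<and> per x dvd k" if "k > 0" for k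
    using pw_idem_iff[OF assms that] unfolding Idem_def by simp
  have mod_iff: "idx x mod per x = 1 mod per x \<longleftrightarrow> per x dvd idx x - 1"
    using mod_eq_dvd_iff_nat[of 1 "idx x" "per x"] I by simp
  show ?thesis
  proof
    assume nonidem: "\<forall>k\<in>{1..idx x + per x - 2}. pw x k \<notin> Idem"
    obtain j where j: "j \<in> {1..idx x + per x - 1}" "idpow x = pw x j"
      using idpow_in_gen[OF assms] unfolding gen_singleton_periodic[OF assms] by auto
    then have "j = idx x + per x - 1" using nonidem idpow_idem[OF assms] by fastforce
    then have "per x dvd (idx x - 1) + per x" using j idem_iff[of j] idpow_idem[OF assms] I
      by (simp add: add.commute)
    then show "idx x mod per x = 1 mod per x" using mod_iff by simp
  next
    assume "idx x mod per x = 1 mod per x"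
    then have dvd: "per x dvd idx x - 1" using mod_iff by simp
    show "\<forall>k\<in>{1..idx x + per x - 2}. pw x k \<notin> Idem"
    proof (intro ballI notI)
      fix k assume k: "k \<in> {1..idx x + per x - 2}" and "pw x k \<in> Idem"
      then have "idx x \<le> k" "per x dvd k" using idem_iff[of k] by auto
      then have "per x dvd k - (idx x - 1)" using dvd by (simp add: dvd_diff_nat)
      moreover have "0 < k - (idx x - 1)" "k - (idx x - 1) < per x" using k \<open>idx x \<le> k\<close> I by auto
      ultimately show False using nat_dvd_not_less by blast
    qed
  qed
qed

text \<open>When \<open>l\<close> is absorbed by its idempotent power, \<open>x \<mapsto> x * idpow l\<close> fixes all of \<open>\<langle>l\<rangle>\<close>, so
  \<open>\<langle>l\<rangle>\<close> is already its own kernel, a cyclic group.\<close>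

lemma group_with_id_gen_singleton:
  assumes l: "periodic l" "l * idpow l = l"
  shows "group_with_id (gen {l}) (idpow l)"
  unfolding group_with_id_def
proof (intro conjI ballI)
  show "idpow l \<in> gen {l}" by (rule idpow_in_gen[OF l(1)])
next
  fix a b assume "a \<in> gen {l}" "b \<in> gen {l}"
  then show "a * b \<in> gen {l}" by (auto intro: gen_mult)
next
  fix g assume "g \<in> gen {l}"
  then obtain i where i: "g = pw l i" "i > 0" unfolding gen_singleton by auto
  have "g * idpow l = g" using pw_mult_pw_absorb_right[OF l(2) i(2), of 1] i(1) by simp
  moreover have "idpow l * g = g * idpow l"
    using pw_commute[of l l] idpow_pos[OF l(1)] i unfolding idpow_def by simp
  ultimately show "idpow l * g = g" "g * idpow l = g" by auto
  define j where "j = per l * (i + idx l) - i"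
  have "i + idx l \<le> per l * (i + idx l)" using per_pos[OF l(1)] by simp
  then have j: "j > 0" "i + j = per l * (i + idx l)"
    unfolding j_def using idx_pos[OF l(1)] by linarith+
  moreover have "idx l \<le> per l * (i + idx l)" using \<open>i + idx l \<le> per l * (i + idx l)\<close> by linarith
  ultimately have "pw l (i + j) = idpow l"
    using pw_eq_idpow[OF l(1), of "i + j"] per_pos[OF l(1)] i(2) by simp
  then have "g * pw l j = idpow l" "pw l j * g = idpow l"
    using pw_add[OF i(2) j(1), of l] pw_add[OF j(1) i(2), of l] i(1) by (simp_all add: add.commute)
  then show "\<exists>h\<in>gen {l}. g * h = idpow l \<and> h * g = idpow l"
    using j(1) unfolding gen_singleton by blast
qed

lemma idx_eq_1_if_group:
  assumes "periodic x" "group_with_id (gen {x}) e"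
  shows "idx x = 1"
proof -
  obtain k where k: "e = pw x k" "k > 0"
    using assms(2) unfolding group_with_id_def gen_singleton by auto
  have "x * e = x" using assms(2) gen_base[of x "{x}"] unfolding group_with_id_def by auto
  then have "pw x (Suc k) = pw x 1" using pw_Suc[OF k(2), of x] k(1) by simp
  then have "idx x \<le> 1" using idx_le[of 1 "Suc k" x] k(2) by simp
  then show ?thesis using idx_pos[OF assms(1)] by simp
qed

section \<open>Products of subsequences\<close>

definition subprods :: "'a::semigroup_mult multiset \<Rightarrow> 'a set" where
  "subprods M = {sprod xs | xs. xs \<noteq> [] \<and> mset xs \<subseteq># M}"

text \<open>A subsequence taken in any order is just a list whose multiset of terms is a
  sub-multiset of the terms of \<open>L\<close>.\<close>

lemma Prods_eq_subprods: "Prods L = subprods (mset L)"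
  unfolding subprods_def
proof (intro equalityI subsetI)
  fix p assume "p \<in> Prods L"
  then obtain ixs where ixs: "p = sprod (map (\<lambda>i. L ! i) ixs)" "ixs \<noteq> []" "distinct ixs"
    "set ixs \<subseteq> {..<length L}"
    unfolding Prods_def by auto
  have "mset ixs \<subseteq># mset [0..<length L]"
    using ixs(3,4)
    by (auto simp: mset_set_set[symmetric] subseteq_mset_def count_mset_set' atLeast0LessThan)
  then have "image_mset (\<lambda>i. L ! i) (mset ixs) \<subseteq># image_mset (\<lambda>i. L ! i) (mset [0..<length L])"
    by (rule image_mset_subseteq_mono)
  then have "mset (map (\<lambda>i. L ! i) ixs) \<subseteq># mset L"
    by (metis map_nth mset_map)
  then show "p \<in> {sprod xs | xs. xs \<noteq> [] \<and> mset xs \<subseteq># mset L}" using ixs by auto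
next
  fix p assume "p \<in> {sprod xs | xs. xs \<noteq> [] \<and> mset xs \<subseteq># mset L}"
  then obtain xs where xs: "p = sprod xs" "xs \<noteq> []" "mset xs \<subseteq># mset L" by auto
  then obtain zs where "mset (xs @ zs) = mset L" using mset_le_perm_append by blast
  then obtain f where f: "bij_betw f {..<length (xs @ zs)} {..<length L}"
    "\<forall>i<length (xs @ zs). (xs @ zs) ! i = L ! (f i)"
    using permutation_Ex_bij by blast
  define ixs where "ixs = map f [0..<length xs]"
  have "inj_on f {..<length (xs @ zs)}" using f(1) unfolding bij_betw_def by simp
  then have "inj_on f {..<length xs}" by (rule inj_on_subset) auto
  then have "distinct ixs" unfolding ixs_def by (simp add: distinct_map atLeast_upt)
  moreover have "set ixs \<subseteq> {..<length L}" unfolding ixs_def using f(1) by (auto simp: bij_betw_def)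
  moreover have "map (\<lambda>i. L ! i) ixs = xs" unfolding ixs_def
  proof (rule nth_equalityI)
    fix i assume "i < length (map (\<lambda>i. L ! i) (map f [0..<length xs]))"
    then have "i < length xs" by simp
    then show "map (\<lambda>i. L ! i) (map f [0..<length xs]) ! i = xs ! i"
      using f(2)[rule_format, of i] by (simp add: nth_append)
  qed simp
  moreover have "ixs \<noteq> []" using xs(2) ixs_def by simp
  ultimately show "p \<in> Prods L" unfolding Prods_def using xs(1) by force
qed

lemma subprods_mono:
  assumes "M \<subseteq># M'"
  shows "subprods M \<subseteq> subprods M'"
proof
  fix p assume "p \<in> subprods M"
  then obtain xs where "p = sprod xs" "xs \<noteq> []" "mset xs \<subseteq># M" unfolding subprods_def by auto
  moreover have "mset xs \<subseteq># M'" using calculation(3) assms by (rule subset_mset.order_trans)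
  ultimately show "p \<in> subprods M'" unfolding subprods_def by auto
qed

lemma in_subprods_add_mset: "a \<in> subprods (add_mset a M)"
  unfolding subprods_def by (auto intro!: exI[of _ "[a]"])

lemma mult_in_subprods_add_mset:
  assumes "p \<in> subprods M"
  shows "p * a \<in> subprods (add_mset a M)"
proof -
  obtain xs where xs: "p = sprod xs" "xs \<noteq> []" "mset xs \<subseteq># M"
    using assms unfolding subprods_def by auto
  then have "sprod (xs @ [a]) = p * a" "mset (xs @ [a]) \<subseteq># add_mset a M"
    using sprod_append[of xs "[a]"] by auto
  then show ?thesis unfolding subprods_def using xs(2) by (intro CollectI exI[of _ "xs @ [a]"]) auto
qed

lemma subprods_subset_gen: "subprods M \<subseteq> gen (set_mset M)"
proof
  fix p assume "p \<in> subprods M"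
  then obtain xs where xs: "p = sprod xs" "xs \<noteq> []" "mset xs \<subseteq># M"
    unfolding subprods_def by auto
  have "set xs \<subseteq> set_mset M" using set_mset_mono[OF xs(3)] by simp
  then show "p \<in> gen (set_mset M)" using sprod_in_gen xs by blast
qed

lemma subprods_replicate_mset: "subprods (replicate_mset v x) = pw x ` {1..v}"
proof (intro equalityI subsetI)
  fix p assume "p \<in> subprods (replicate_mset v x)"
  then obtain xs where xs: "p = sprod xs" "xs \<noteq> []" "mset xs \<subseteq># replicate_mset v x"
    unfolding subprods_def by auto
  have "y = x" if "y \<in> set xs" for y
    using that set_mset_mono[OF xs(3)] by (auto split: if_splits)
  then have "xs = replicate (length xs) x" by (simp add: replicate_length_same)
  moreover have "length xs \<le> v" using size_mset_mono[OF xs(3)] by simp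
  moreover have "length xs > 0" using xs(2) by simp
  ultimately show "p \<in> pw x ` {1..v}" using xs(1) unfolding pw_def
    by (intro image_eqI[of _ _ "length xs"]) (auto simp: Suc_le_eq)
next
  fix p assume "p \<in> pw x ` {1..v}"
  then obtain k where k: "p = pw x k" "1 \<le> k" "k \<le> v" by auto
  have "mset (replicate k x) \<subseteq># replicate_mset v x" using k by (simp add: subseteq_mset_def)
  then show "p \<in> subprods (replicate_mset v x)" using k unfolding subprods_def pw_def
    by (intro CollectI exI[of _ "replicate k x"]) auto
qed

definition pairwise_absorbing :: "'a::semigroup_mult set \<Rightarrow> bool" where
  "pairwise_absorbing A \<longleftrightarrow>
     (\<forall>a\<in>A. \<forall>b\<in>A. a \<noteq> b \<longrightarrow> a * b = b * a \<and> (a * b = a \<or> a * b = b))"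

lemma sprod_pairwise_absorbing:
  assumes A: "pairwise_absorbing A"
  shows "xs \<noteq> [] \<Longrightarrow> set xs \<subseteq> A \<Longrightarrow>
    \<exists>m\<in>set xs. (\<forall>z\<in>set xs. z \<noteq> m \<longrightarrow> m * z = m) \<and> sprod xs = pw m (count_list xs m)"
proof (induction xs)
  case (Cons x xs)
  show ?case
  proof (cases "xs = []")
    case False
    then obtain m where m: "m \<in> set xs" "\<forall>z\<in>set xs. z \<noteq> m \<longrightarrow> m * z = m"
      "sprod xs = pw m (count_list xs m)" using Cons by auto
    have c: "count_list xs m > 0" using m(1) count_list_0_iff[of xs m] by auto
    have prod: "sprod (x # xs) = x * pw m (count_list xs m)" using False m(3) by (simp add: sprod_Cons)
    have "x \<in> A" "m \<in> A" using Cons.prems m(1) by auto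
    then have "x \<noteq> m \<Longrightarrow> x * m = m * x \<and> (x * m = x \<or> x * m = m)"
      using A unfolding pairwise_absorbing_def by blast
    then consider "x = m" | "x \<noteq> m" "x * m = m" "m * x = m" | "x \<noteq> m" "x * m = x" "m * x = x"
      by metis
    then show ?thesis
    proof cases
      case 1
      then have "sprod (x # xs) = pw m (count_list (x # xs) m)" using prod c by (simp add: pw_Suc)
      then show ?thesis using m(1,2) 1 by auto
    next
      case 2
      then have "sprod (x # xs) = pw m (count_list (x # xs) m)"
        using prod mult_pw_absorb_left[OF 2(2) c] by simp
      then show ?thesis using m(1,2) 2 by auto
    next
      case 3
      have "x \<notin> set xs" using m(2) 3 by auto
      then have "count_list (x # xs) x = 1" by (simp add: count_list_0_iff)
      moreover have "x * z = x" if "z \<in> set xs" for z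
      proof (cases "z = m")
        case False
        then have "m * z = m" using m(2) that by blast
        then show ?thesis using 3(2) by (metis mult.assoc)
      qed (use 3 in simp)
      ultimately show ?thesis using prod mult_pw_absorb_right[OF 3(2) c] by auto
    qed
  qed simp
qed simp

section \<open>Semigroups with finitely many non-idempotents\<close>

lemma periodic_if_finite_nonidem:
  assumes "finite (UNIV - Idem :: 'a::semigroup_mult set)"
  shows "periodic (x :: 'a)"
proof (rule ccontr)
  assume aperiodic: "\<not> periodic x"
  have "pw x k \<in> UNIV - Idem" if "k > 0" for k
  proof -
    have "pw x (k + k) \<noteq> pw x k"
    proof
      assume "pw x (k + k) = pw x k"
      then have "periodic x"
        unfolding periodic_def using that by (intro exI[of _ "k + k"] conjI exI[of _ k]) auto
      with aperiodic show False by simp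
    qed
    then show ?thesis using pw_add[of k k x] that unfolding Idem_def by auto
  qed
  then have "periodic x" by (rule periodicI_finite[OF assms])
  with aperiodic show False by contradiction
qed

context
  fixes M :: "'a::semigroup_mult multiset"
  assumes finite_nonidem: "finite (UNIV - Idem :: 'a set)"
    and subprods_idem_free: "subprods M \<inter> Idem = {}"
begin

lemma subprods_subset_nonidem: "V \<subseteq># M \<Longrightarrow> subprods V \<subseteq> UNIV - Idem"
  using subprods_mono subprods_idem_free by blast

text \<open>If adding \<open>a\<close> produced no new product, all powers of \<open>a\<close> would be products over \<open>V\<close>;
  being periodic, \<open>a\<close> has an idempotent power, contradicting idempotent-freeness.\<close>

lemma subprods_psubset_add_mset:
  assumes "add_mset a V \<subseteq># M"
  shows "subprods V \<subset> subprods (add_mset a V)"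
proof (rule ccontr)
  assume "\<not> ?thesis"
  then have eq: "subprods (add_mset a V) = subprods V"
    using subprods_mono[of V "add_mset a V"] by auto
  have powers: "pw a k \<in> subprods V" if "k > 0" for k
    using that
  proof (induction k rule: nat_induct_non_zero)
    case 1 then show ?case using in_subprods_add_mset[of a V] eq by simp
  next
    case (Suc n)
    then show ?case using mult_in_subprods_add_mset[of "pw a n" V a] eq pw_Suc_right[of n a] by simp
  qed
  have "V \<subseteq># add_mset a V" by simp
  then have "V \<subseteq># M" using assms by (rule subset_mset.order_trans)
  then have "finite (subprods V)"
    using subprods_subset_nonidem finite_nonidem by (meson finite_subset)
  then have "periodic a" by (rule periodicI_finite[OF _ powers])
  have "idpow a \<in> subprods V"
    using powers[OF idpow_pos[OF \<open>periodic a\<close>]] unfolding idpow_def .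
  moreover have "subprods V \<subseteq> UNIV - Idem" using subprods_subset_nonidem[OF \<open>V \<subseteq># M\<close>] .
  ultimately show False using idpow_idem[OF \<open>periodic a\<close>] by blast
qed

lemma card_subprods_add:
  "W + D \<subseteq># M \<Longrightarrow> card (subprods W) + size D \<le> card (subprods (W + D))"
proof (induction D)
  case (add a D)
  have "W + D \<subseteq># W + add_mset a D" by simp
  then have "W + D \<subseteq># M" using add.prems by (rule subset_mset.order_trans)
  have "subprods (W + D) \<subset> subprods (add_mset a (W + D))"
    using subprods_psubset_add_mset add.prems by simp
  moreover have "finite (subprods (add_mset a (W + D)))"
    using subprods_subset_nonidem[of "add_mset a (W + D)"] add.prems finite_nonidem finite_subset
    by auto
  ultimately have "card (subprods (W + D)) < card (subprods (add_mset a (W + D)))"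
    by (simp add: psubset_card_mono)
  then show ?case using add.IH[OF \<open>W + D \<subseteq># M\<close>] by simp
qed simp

text \<open>Every term adds at least one new product, while all products of \<open>M\<close> lie among the
  \<open>size M\<close> non-idempotents; so the counts are squeezed.\<close>

lemma
  assumes "size M = card (UNIV - Idem :: 'a set)"
  shows card_subprods: "W \<subseteq># M \<Longrightarrow> card (subprods W) = size W"
    and subprods_eq_nonidem: "subprods M = UNIV - Idem"
proof -
  have bound: "card (subprods M) \<le> size M"
    using card_mono[OF finite_nonidem subprods_subset_nonidem[OF subset_mset.refl]] assms by simp
  show card: "card (subprods W) = size W" if "W \<subseteq># M" for W
  proof -
    have "size W \<le> card (subprods W)" using card_subprods_add[of "{#}" W] that by simp
    moreover have "card (subprods W) + size (M - W) \<le> card (subprods M)"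
      using card_subprods_add[of W "M - W"] that by (simp add: subset_mset.add_diff_inverse)
    moreover have "size (M - W) = size M - size W" "size W \<le> size M"
      using that by (simp_all add: size_Diff_submset size_mset_mono)
    ultimately show ?thesis using bound by linarith
  qed
  have "card (subprods M) = card (UNIV - Idem :: 'a set)"
    using card[OF subset_mset.refl] assms by simp
  then show "subprods M = UNIV - Idem"
    by (rule card_subset_eq[OF finite_nonidem subprods_subset_nonidem[OF subset_mset.refl]])
qed

end

section \<open>Archimedean components of commutative periodic semigroups\<close>

context
  fixes R :: "'a::semigroup_mult set"
  assumes closed: "\<forall>a\<in>R. \<forall>b\<in>R. a * b \<in> R"
    and commute: "\<forall>a\<in>R. \<forall>b\<in>R. a * b = b * a"
    and periodic: "\<forall>a\<in>R. periodic a"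
begin

lemma idpow_in_closed: "a \<in> R \<Longrightarrow> idpow a \<in> R"
  unfolding idpow_def using pw_in_closed[OF closed] idpow_pos periodic by blast

text \<open>Raising \<open>a ^ m = b * c\<close> to a power that is a multiple of both periods and beyond both
  indices turns every factor into its idempotent power.\<close>

lemma idpow_mult_idpow_if_Nle:
  assumes "a \<in> R" "b \<in> R" "Nle R a b"
  shows "idpow b * idpow a = idpow a"
proof -
  obtain c m where c: "c \<in> R" "m > 0" "pw a m = b * c" using assms(3) unfolding Nle_def by auto
  have a: "periodic a" and b: "periodic b" using periodic assms(1,2) by auto
  define q where "q = idx a * per a * idx b * per b"
  have q: "q > 0" unfolding q_def using idpow_pos[OF a] idpow_pos[OF b] by simp
  have "idx a \<le> q" "idx b \<le> q"
    unfolding q_def using per_pos[OF a] idx_pos[OF b] per_pos[OF b] idx_pos[OF a] by simp_all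
  then have "pw (pw a m) q = idpow a" "pw b q = idpow b"
    using pw_pw[OF c(2) q, of a] pw_eq_idpow[OF a, of "m * q"] pw_eq_idpow[OF b q] q c(2)
    by (auto simp: q_def intro: order_trans)
  moreover have "pw (b * c) q = pw b q * pw c q"
    using pw_mult_distrib commute c(1) assms(2) q by blast
  ultimately have "idpow a = idpow b * pw c q" using c(3) by simp
  then show ?thesis using idpow_idem[OF b] unfolding Idem_def by (simp flip: mult.assoc)
qed

lemma Nle_if_idpow_eq:
  assumes "a \<in> R" "b \<in> R" "idpow a = idpow b"
  shows "Nle R a b"
proof -
  have a: "periodic a" and b: "periodic b" using periodic assms(1,2) by auto
  have "\<exists>c\<in>R. b * c = idpow b"
  proof (cases "idx b * per b = 1")
    case True
    then have "b * b = idpow b" using idpow_idem[OF b] unfolding idpow_def Idem_def by simp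
    then show ?thesis using assms(2) by blast
  next
    case False
    then have k: "idx b * per b = Suc (idx b * per b - 1)" "idx b * per b - 1 > 0"
      using idpow_pos[OF b] by arith+
    then have "b * pw b (idx b * per b - 1) = idpow b" unfolding idpow_def by (metis pw_Suc)
    then show ?thesis using pw_in_closed[OF closed assms(2) k(2)] by blast
  qed
  then show ?thesis
    unfolding Nle_def using assms(3) idpow_pos[OF a] unfolding idpow_def by metis
qed

lemma Neq_iff_idpow_eq:
  assumes "a \<in> R" "b \<in> R"
  shows "Neq R a b \<longleftrightarrow> idpow a = idpow b"
proof
  assume "Neq R a b"
  then have "idpow b * idpow a = idpow a" "idpow a * idpow b = idpow b"
    using idpow_mult_idpow_if_Nle assms unfolding Neq_def by auto
  moreover have "idpow a * idpow b = idpow b * idpow a" using commute idpow_in_closed assms by blast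
  ultimately show "idpow a = idpow b" by simp
qed (use Nle_if_idpow_eq assms in \<open>auto simp: Neq_def\<close>)

end

lemma in_own_arch_comp:
  assumes "a \<in> R"
  shows "{b \<in> R. Neq R a b} \<in> arch_comps R" "a \<in> {b \<in> R. Neq R a b}"
proof -
  show "{b \<in> R. Neq R a b} \<in> arch_comps R" unfolding arch_comps_def using assms by blast
  have "pw a 2 = a * a" using pw_add[of 1 1 a] by (simp add: numeral_2_eq_2)
  then have "Nle R a a" unfolding Nle_def using assms by (intro bexI[of _ a] exI[of _ 2]) auto
  then show "a \<in> {b \<in> R. Neq R a b}" unfolding Neq_def using assms by simp
qed

section \<open>Subsemigroups generated by pairwise absorbing elements\<close>

context
  fixes X :: "'a::semigroup_mult set"
  assumes absorbing: "pairwise_absorbing X"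
begin

lemma pw_mult_pw_cases:
  assumes "y \<in> X" "z \<in> X" "y \<noteq> z" "i > 0" "j > 0"
  shows "(pw y i * pw z j = pw y i \<and> pw z j * pw y i = pw y i)
       \<or> (pw y i * pw z j = pw z j \<and> pw z j * pw y i = pw z j)"
proof -
  have yz: "y * z = z * y" "y * z = y \<or> y * z = z"
    using absorbing assms(1-3) unfolding pairwise_absorbing_def by auto
  have "pw y i * pw z j = pw z j * pw y i" using pw_commute[OF yz(1) assms(4,5)] .
  then show ?thesis
    using pw_mult_pw_absorb_right[of y z i j] pw_mult_pw_absorb_right[of z y j i] yz assms(4,5)
    by auto
qed

lemma gen_pairwise_absorbing: "gen X = {pw y k | y k. y \<in> X \<and> k > 0}"
proof (intro equalityI subsetI)
  fix a assume "a \<in> gen X"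
  then show "a \<in> {pw y k | y k. y \<in> X \<and> k > 0}"
  proof (induction rule: gen.induct)
    case (gen_base x) then show ?case by (auto intro!: exI[of _ 1])
  next
    case (gen_mult a b)
    then obtain y i z j where a: "a = pw y i" "y \<in> X" "i > 0" and b: "b = pw z j" "z \<in> X" "j > 0"
      by auto
    show ?case
    proof (cases "y = z")
      case True
      then have "a * b = pw y (i + j)" using a b pw_add[of i j y] by simp
      then show ?thesis using a by auto
    next
      case False
      then show ?thesis using pw_mult_pw_cases[OF a(2) b(2) False a(3) b(3)] a b by auto
    qed
  qed
next
  fix a assume "a \<in> {pw y k | y k. y \<in> X \<and> k > 0}"
  then show "a \<in> gen X" using pw_in_gen gen_base by blast
qed

lemma gen_pairwise_absorbingE:
  assumes "a \<in> gen X"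
  obtains y k where "a = pw y k" "y \<in> X" "k > 0"
  using assms gen_pairwise_absorbing by auto

lemma commute_gen_pairwise_absorbing: "\<forall>a\<in>gen X. \<forall>b\<in>gen X. a * b = b * a"
proof (intro ballI)
  fix a b assume "a \<in> gen X" "b \<in> gen X"
  then obtain y i z j where a: "a = pw y i" "y \<in> X" "i > 0" and b: "b = pw z j" "z \<in> X" "j > 0"
    by (metis gen_pairwise_absorbingE)
  show "a * b = b * a"
  proof (cases "y = z")
    case True
    then show ?thesis using a b pw_add[of i j y] pw_add[of j i y] by (simp add: add.commute)
  next
    case False
    then show ?thesis using pw_mult_pw_cases[OF a(2) b(2) False a(3) b(3)] a b by auto
  qed
qed

lemma Nle_pw_pw:
  assumes "y \<in> X" "i > 0" "j > 0"
  shows "Nle (gen X) (pw y i) (pw y j)"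
proof -
  have "j < i * (j + 1)" using mult_le_mono1[of 1 i "j + 1"] assms(2) by simp
  then have "i * (j + 1) = j + (i * (j + 1) - j)" "i * (j + 1) - j > 0" by simp_all
  then have "pw (pw y i) (j + 1) = pw y j * pw y (i * (j + 1) - j)"
    using pw_pw[OF assms(2), of "j + 1" y] pw_add[OF assms(3), of "i * (j + 1) - j" y] by simp
  moreover have "pw y (i * (j + 1) - j) \<in> gen X"
    using pw_in_gen[OF gen_base[OF assms(1)]] \<open>i * (j + 1) - j > 0\<close> by blast
  ultimately show ?thesis unfolding Nle_def by (intro bexI exI[of _ "j + 1"]) auto
qed

lemma Nle_if_absorbs:
  assumes "a \<in> gen X" "b \<in> gen X" "a * b = a"
  shows "Nle (gen X) a b"
  unfolding Nle_def using assms commute_gen_pairwise_absorbing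
  by (intro bexI[of _ a] exI[of _ 1]) auto

lemma Y_chain_gen_pairwise_absorbing: "Y_chain (gen X)"
  unfolding Y_chain_def
proof (intro ballI)
  fix a b assume ab: "a \<in> gen X" "b \<in> gen X"
  then obtain y i z j where a: "a = pw y i" "y \<in> X" "i > 0" and b: "b = pw z j" "z \<in> X" "j > 0"
    by (metis gen_pairwise_absorbingE)
  show "Nle (gen X) a b \<or> Nle (gen X) b a"
  proof (cases "y = z")
    case True then show ?thesis using Nle_pw_pw a b by auto
  next
    case False
    then show ?thesis using pw_mult_pw_cases[OF a(2) b(2) False a(3) b(3)] a b Nle_if_absorbs ab
      by auto
  qed
qed

lemma Nless_absorbs:
  assumes "a \<in> gen X" "b \<in> gen X" "Nless (gen X) a b"
  shows "a * b = a"
proof -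
  obtain y i z j where a: "a = pw y i" "y \<in> X" "i > 0" and b: "b = pw z j" "z \<in> X" "j > 0"
    using assms(1,2) by (metis gen_pairwise_absorbingE)
  show ?thesis
  proof (cases "y = z")
    case True then show ?thesis using Nle_pw_pw a b assms(3) unfolding Nless_def by auto
  next
    case False
    then show ?thesis using pw_mult_pw_cases[OF a(2) b(2) False a(3) b(3)] a b Nle_if_absorbs
        assms unfolding Nless_def by auto
  qed
qed

end

section \<open>Sequences as long as the set of non-idempotents\<close>

locale nonidem_length_sequence =
  fixes T :: "'a::semigroup_mult list"
  assumes finite_nonidem: "finite (UNIV - Idem :: 'a set)"
    and length_T: "length T = card (UNIV - Idem :: 'a set)"
begin

lemma periodic_all: "periodic (x :: 'a)"
  using periodic_if_finite_nonidem[OF finite_nonidem] .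

lemma gen_singleton_subset_gen_T: "x \<in> set T \<Longrightarrow> gen {x} \<subseteq> gen (set T)"
  using gen_mono[of "{x}" "set T"] by auto

end

locale idem_free_sequence = nonidem_length_sequence +
  assumes idem_free: "Prods T \<inter> Idem = {}"

text \<open>The conditions of the characterisation except finiteness of \<open>R\<close>, which the converse
  does not need.\<close>

locale structured_sequence = nonidem_length_sequence +
  assumes commute: "\<forall>a\<in>gen (set T). \<forall>b\<in>gen (set T). a * b = b * a"
    and nonidem_subset_gen_T: "UNIV - gen (set T) \<subseteq> Idem"
    and chain: "Y_chain (gen (set T))"
    and lower_absorbs:
      "\<forall>x1\<in>gen (set T). \<forall>x2\<in>gen (set T). Nless (gen (set T)) x1 x2 \<longrightarrow> x1 * x2 = x1"
    and arch_comps_cases: "\<forall>C\<in>arch_comps (gen (set T)).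
          (\<exists>x\<in>set T. C = gen {x} \<and> idx x mod per x = 1 mod per x)
        \<or> (\<exists>x1\<in>set T. \<exists>x2\<in>set T. \<exists>e. ideal_ext_cyclic C x1 x2 e \<and> x1 * e = e)"
    and count_list_T: "\<forall>x\<in>set T. count_list T x = idx x + per x - 2"

section \<open>Idempotent-free sequences have the stated structure\<close>

context idem_free_sequence
begin

lemma
  shows card_subprods_T: "W \<subseteq># mset T \<Longrightarrow> card (subprods W) = size W"
    and subprods_T: "subprods (mset T) = UNIV - Idem"
    and subprods_T_nonidem: "W \<subseteq># mset T \<Longrightarrow> subprods W \<subseteq> UNIV - Idem"
  using card_subprods[OF finite_nonidem _ _] subprods_eq_nonidem[OF finite_nonidem _ _]
    subprods_subset_nonidem[OF finite_nonidem] idem_free length_T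
  by (simp_all add: Prods_eq_subprods)

lemma nonidem_if_in_T: "x \<in> set T \<Longrightarrow> x \<notin> Idem"
  using subprods_T_nonidem[of "{#x#}"] in_subprods_add_mset[of x "{#}"] by auto

text \<open>Two distinct terms give exactly two products, so \<open>x * y\<close> and \<open>y * x\<close> lie in \<open>{x, y}\<close>;
  the two mixed assignments would make \<open>x\<close> or \<open>y\<close> idempotent.\<close>

lemma pairwise_absorbing_T: "pairwise_absorbing (set T)"
  unfolding pairwise_absorbing_def
proof (intro ballI impI)
  fix x y assume xy: "x \<in> set T" "y \<in> set T" "x \<noteq> y"
  define W where "W = add_mset y {#x#}"
  have W: "W \<subseteq># mset T" unfolding W_def using xy
    by (auto simp: subseteq_mset_def count_mset count_list_0_iff Suc_le_eq intro: Nat.gr0I)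
  have "x \<in> subprods W" "y \<in> subprods W" "x * y \<in> subprods W" "y * x \<in> subprods W"
    unfolding W_def
    using subprods_mono[of "{#x#}" "add_mset y {#x#}"] in_subprods_add_mset[of x "{#}"]
      in_subprods_add_mset[of y "{#x#}"] in_subprods_add_mset[of y "{#}"]
      mult_in_subprods_add_mset[of x "{#x#}" y]
      mult_in_subprods_add_mset[of y "{#y#}" x]
    by (auto simp: add_mset_commute)
  moreover have "finite (subprods W)"
    using subprods_T_nonidem[OF W] finite_nonidem finite_subset by blast
  moreover have "card (subprods W) = card {x, y}" using card_subprods_T[OF W] xy(3) W_def by simp
  ultimately have "subprods W = {x, y}" by (metis card_subset_eq empty_subsetI insert_subset)
  then have xy_in: "x * y \<in> {x, y}" "y * x \<in> {x, y}"
    using \<open>x * y \<in> subprods W\<close> \<open>y * x \<in> subprods W\<close> by auto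
  have "x * x \<noteq> x" "y * y \<noteq> y" using nonidem_if_in_T xy unfolding Idem_def by auto
  then have "x * y = y * x" using xy_in by (auto simp flip: mult.assoc) (metis mult.assoc)+
  with xy_in show "x * y = y * x \<and> (x * y = x \<or> x * y = y)" by auto
qed

text \<open>Equal powers of two distinct terms: whichever of the two absorbs the other turns the
  equation into \<open>x ^ (k + 1) = x\<close> or \<open>x ^ (k + 1) = x ^ k\<close>, which makes \<open>x ^ k\<close> idempotent.\<close>

lemma idem_if_pw_eq_pw:
  assumes "x \<in> set T" "m \<in> set T" "x \<noteq> m" "k > 0" "c > 0" "pw x k = pw m c"
  shows "pw x k \<in> Idem"
proof -
  have x: "periodic x" by (rule periodic_all)
  have "x * m = m * x" "x * m = x \<or> x * m = m"
    using pairwise_absorbing_T assms(1-3) unfolding pairwise_absorbing_def by auto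
  then consider "x * m = x" | "m * x = m" by auto
  then have "idx x \<le> k \<and> per x dvd k"
  proof cases
    case 1
    then have "pw x (Suc k) = pw x 1"
      using mult_pw_absorb_right[OF 1 assms(5)] assms(6) pw_Suc[OF assms(4), of x] by simp
    then have "idx x \<le> 1" "Suc k mod per x = 1 mod per x"
      using pw_eq_pwD[OF x, of "Suc k" 1] assms(4) by auto
    then show ?thesis using assms(4) mod_eq_dvd_iff_nat[of 1 "Suc k" "per x"] by simp
  next
    case 2
    then have "pw x (Suc k) = pw x k"
      using pw_mult_pw_absorb_right[OF 2 assms(5), of 1] assms(6) pw_Suc_right[OF assms(4), of x]
      by simp
    then have "idx x \<le> k" "Suc k mod per x = k mod per x"
      using pw_eq_pwD[OF x, of "Suc k" k] assms(4) by auto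
    then show ?thesis using mod_eq_dvd_iff_nat[of k "Suc k" "per x"] by simp
  qed
  then show ?thesis using pw_idem_iff[OF x assms(4)] unfolding Idem_def by simp
qed

lemma nonidem_pw_eq_initial_pw:
  assumes "x \<in> set T" "k > 0" "pw x k \<notin> Idem"
  shows "\<exists>a\<in>{1..count_list T x}. pw x k = pw x a"
proof -
  obtain xs where xs: "pw x k = sprod xs" "xs \<noteq> []" "mset xs \<subseteq># mset T"
    using subprods_T assms(3) unfolding subprods_def by blast
  have "set xs \<subseteq> set T" using set_mset_mono[OF xs(3)] by simp
  then obtain m where m: "m \<in> set xs" "sprod xs = pw m (count_list xs m)"
    using sprod_pairwise_absorbing[OF pairwise_absorbing_T xs(2)] by auto
  have c: "count_list xs m > 0" using m(1) count_list_0_iff[of xs m] by auto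
  have "count_list xs m \<le> count_list T m"
    using mset_subset_eq_count[OF xs(3), of m] by (simp add: count_mset)
  moreover have "m = x"
    using idem_if_pw_eq_pw[OF assms(1) _ _ assms(2) c] m xs(1) \<open>set xs \<subseteq> set T\<close> assms(3)
    by auto
  ultimately show ?thesis using m xs(1) c by (intro bexI[of _ "count_list xs m"]) auto
qed

lemma initial_pws_eq_nonidem:
  assumes "x \<in> set T"
  shows "pw x ` {1..count_list T x} = gen {x} - Idem"
proof
  have sub: "replicate_mset (count_list T x) x \<subseteq># mset T"
    by (simp add: count_mset subseteq_mset_def)
  have "pw x ` {1..count_list T x} \<subseteq> UNIV - Idem"
    using subprods_T_nonidem[OF sub] by (simp add: subprods_replicate_mset)
  then show "pw x ` {1..count_list T x} \<subseteq> gen {x} - Idem" unfolding gen_singleton by auto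
  show "gen {x} - Idem \<subseteq> pw x ` {1..count_list T x}"
  proof
    fix y assume "y \<in> gen {x} - Idem"
    then obtain k where "y = pw x k" "k > 0" "pw x k \<notin> Idem" unfolding gen_singleton by auto
    then show "y \<in> pw x ` {1..count_list T x}" using nonidem_pw_eq_initial_pw[OF assms] by auto
  qed
qed

lemma count_list_T: "x \<in> set T \<Longrightarrow> count_list T x = idx x + per x - 2"
proof -
  assume x: "x \<in> set T"
  have sub: "replicate_mset (count_list T x) x \<subseteq># mset T"
    by (simp add: count_mset subseteq_mset_def)
  have "card (pw x ` {1..count_list T x}) = count_list T x"
    using card_subprods_T[OF sub] by (simp add: subprods_replicate_mset)
  then show ?thesis
    using initial_pws_eq_nonidem[OF x] card_gen_singleton_Diff_Idem[OF periodic_all] by simp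
qed

lemma idx_mod_per_T:
  assumes "x \<in> set T"
  shows "idx x mod per x = 1 mod per x"
proof -
  have "pw x k \<notin> Idem" if "k \<in> {1..idx x + per x - 2}" for k
  proof -
    have "pw x k \<in> pw x ` {1..count_list T x}" using that count_list_T[OF assms] by simp
    then show ?thesis using initial_pws_eq_nonidem[OF assms] by simp
  qed
  then show ?thesis using initial_powers_nonidem_iff[OF periodic_all, of x] by blast
qed

lemma finite_gen_T: "finite (gen (set T))"
proof -
  have "gen (set T) \<subseteq> (\<Union>y\<in>set T. gen {y})"
  proof
    fix a assume "a \<in> gen (set T)"
    then obtain y k where "a = pw y k" "y \<in> set T" "k > 0"
      by (rule gen_pairwise_absorbingE[OF pairwise_absorbing_T])
    then show "a \<in> (\<Union>y\<in>set T. gen {y})" unfolding gen_singleton by auto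
  qed
  moreover have "finite (\<Union>y\<in>set T. gen {y})"
    using finite_gen_singleton[OF periodic_all] by simp
  ultimately show ?thesis by (rule finite_subset)
qed

lemma nonidem_subset_gen_T: "UNIV - gen (set T) \<subseteq> Idem"
  using subprods_T subprods_subset_gen[of "mset T"] by auto

lemma Neq_gen_T_iff:
  assumes "a \<in> gen (set T)" "b \<in> gen (set T)"
  shows "Neq (gen (set T)) a b \<longleftrightarrow> idpow a = idpow b"
  by (rule Neq_iff_idpow_eq[OF _ commute_gen_pairwise_absorbing[OF pairwise_absorbing_T] _ assms])
    (auto intro: gen_mult periodic_all)

lemma idpow_absorbs:
  assumes "z \<in> set T" "w \<in> set T" "z \<noteq> w" "idpow z = idpow w" "z * w = z"
  shows "z * idpow z = z" "w * idpow z = idpow z"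
proof -
  have z: "periodic z" and w: "periodic w" by (rule periodic_all)+
  show "z * idpow z = z" using mult_pw_absorb_right[OF assms(5) idpow_pos[OF w]] assms(4)
    unfolding idpow_def by simp
  have "z * w = w * z"
    using pairwise_absorbing_T assms(1-3) unfolding pairwise_absorbing_def by auto
  then have "idpow z * w = w * idpow z"
    using pw_commute_right idpow_pos[OF z] unfolding idpow_def by blast
  moreover have "idpow z * w = idpow z"
    using pw_mult_pw_absorb_right[OF assms(5) idpow_pos[OF z], of 1] unfolding idpow_def by simp
  ultimately show "w * idpow z = idpow z" by metis
qed

lemma idpow_absorbs_exactly_one:
  assumes "p \<in> set T" "q \<in> set T" "p \<noteq> q" "idpow p = e" "idpow q = e"
  shows "p * e = p \<longleftrightarrow> q * e \<noteq> q"
proof -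
  have not_both: "\<not> (z * e = z \<and> z * e = e)" if "z \<in> set T" "idpow z = e" for z
    using that nonidem_if_in_T idpow_idem[OF periodic_all] by metis
  have "p * q = p \<or> q * p = q"
    using pairwise_absorbing_T assms(1-3) unfolding pairwise_absorbing_def by metis
  then show ?thesis
    using idpow_absorbs[OF assms(1-3)] idpow_absorbs[OF assms(2,1) assms(3)[symmetric]]
      not_both[OF assms(1,4)] not_both[OF assms(2,5)] assms(4,5)
    by auto
qed

lemma same_idpow_at_most_two:
  assumes "y \<in> set T" "u \<in> set T" "y \<noteq> u" "idpow y = e" "idpow u = e"
    and "z \<in> set T" "idpow z = e"
  shows "z = y \<or> z = u"
  using idpow_absorbs_exactly_one[OF assms(1,2,3,4,5)]
    idpow_absorbs_exactly_one[OF assms(1,6) _ assms(4,7)]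
    idpow_absorbs_exactly_one[OF assms(2,6) _ assms(5,7)]
  by blast

lemma not_in_gen_singleton_T:
  assumes "l \<in> set T" "h \<in> set T" "l \<noteq> h"
  shows "h \<notin> gen {l}"
proof
  assume "h \<in> gen {l}"
  then obtain k where k: "h = pw l k" "k > 0" unfolding gen_singleton by auto
  then have "h \<in> Idem" using idem_if_pw_eq_pw[OF assms k(2), of 1] by simp
  then show False using nonidem_if_in_T assms(2) by simp
qed

lemma ideal_ext_cyclic_gen_pair:
  assumes l: "l \<in> set T" and h: "h \<in> set T" and lh: "l \<noteq> h" "l * h = l"
    and e: "idpow l = e" "idpow h = e"
  shows "ideal_ext_cyclic (gen {l} \<union> gen {h}) h l e" "h * e = e"
proof -
  let ?G = "gen {l}" and ?C = "gen {l} \<union> gen {h}"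
  have "l * e = l" "h * e = e" using idpow_absorbs[OF l h lh(1) _ lh(2)] e by auto
  then show "h * e = e" by simp
  have group: "group_with_id ?G e"
    using group_with_id_gen_singleton[OF periodic_all, of l] \<open>l * e = l\<close> e(1) by simp
  have absorb: "a * b = a \<and> b * a = a" if ab: "a \<in> ?G" "b \<in> gen {h}" for a b
  proof -
    obtain i j where "a = pw l i" "i > 0" "b = pw h j" "j > 0"
      using ab unfolding gen_singleton by auto
    moreover have "a \<in> gen (set T)" "b \<in> gen (set T)"
      using ab gen_singleton_subset_gen_T l h by auto
    ultimately show ?thesis
      using pw_mult_pw_absorb_right[OF lh(2)] commute_gen_pairwise_absorbing[OF pairwise_absorbing_T]
      by metis
  qed
  have closed: "\<forall>a\<in>?C. \<forall>b\<in>?C. a * b \<in> ?C"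
    using absorb by (auto intro: gen_mult)
  have ideal: "\<forall>b\<in>?C. \<forall>g\<in>?G. b * g \<in> ?G \<and> g * b \<in> ?G"
    using absorb by (auto intro: gen_mult)
  have "l \<noteq> e" using nonidem_if_in_T[OF l] idpow_idem[OF periodic_all, of l] e(1) by auto
  moreover have "{l, e} \<subseteq> ?G" using idpow_in_gen[OF periodic_all] e(1) gen_base by auto
  moreover from this have "card {l, e} \<le> card ?G"
    by (rule card_mono[OF finite_gen_singleton[OF periodic_all]])
  ultimately have card: "2 \<le> card ?G" by simp
  have "h \<in> ?C - ?G" using not_in_gen_singleton_T[OF l h lh(1)] gen_base by auto
  moreover have "\<exists>n>0. pw b n \<in> ?G" if "b \<in> ?C" for b
  proof -
    have "idpow b = e" using that idpow_gen_singleton[OF periodic_all] e by auto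
    then have "pw b (idx b * per b) \<in> ?G"
      using idpow_in_gen[OF periodic_all, of l] e(1) unfolding idpow_def by simp
    then show ?thesis using idpow_pos[OF periodic_all, of b] by blast
  qed
  moreover have "finite ?C" using finite_gen_singleton[OF periodic_all] by simp
  ultimately show "ideal_ext_cyclic ?C h l e"
    unfolding ideal_ext_cyclic_def Let_def using group closed ideal card by blast
qed

lemma arch_comp_gen_T:
  assumes "a \<in> gen (set T)"
  shows "{b \<in> gen (set T). Neq (gen (set T)) a b} = (\<Union>z\<in>{z \<in> set T. idpow z = idpow a}. gen {z})"
proof (intro equalityI subsetI)
  fix b assume "b \<in> {b \<in> gen (set T). Neq (gen (set T)) a b}"
  then have b: "b \<in> gen (set T)" "idpow a = idpow b" using Neq_gen_T_iff assms by auto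
  obtain z k where "b = pw z k" "z \<in> set T" "k > 0"
    by (rule gen_pairwise_absorbingE[OF pairwise_absorbing_T b(1)])
  then have "b \<in> gen {z}" "z \<in> set T" unfolding gen_singleton by auto
  then show "b \<in> (\<Union>z\<in>{z \<in> set T. idpow z = idpow a}. gen {z})"
    using idpow_gen_singleton[OF periodic_all] b(2) by auto
next
  fix b assume "b \<in> (\<Union>z\<in>{z \<in> set T. idpow z = idpow a}. gen {z})"
  then obtain z where "z \<in> set T" "idpow z = idpow a" "b \<in> gen {z}" by auto
  then have "b \<in> gen (set T)" "idpow b = idpow a"
    using gen_singleton_subset_gen_T idpow_gen_singleton[OF periodic_all] by auto
  then show "b \<in> {b \<in> gen (set T). Neq (gen (set T)) a b}" using Neq_gen_T_iff assms by auto
qed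

text \<open>Each component collects the \<open>\<langle>z\<rangle>\<close> of the terms \<open>z\<close> sharing one idempotent power; there
  are at most two such terms, and with two of them the absorbed one generates the group.\<close>

lemma arch_comps_T_cases:
  assumes "C \<in> arch_comps (gen (set T))"
  shows "(\<exists>x\<in>set T. C = gen {x} \<and> idx x mod per x = 1 mod per x)
       \<or> (\<exists>x1\<in>set T. \<exists>x2\<in>set T. \<exists>e. ideal_ext_cyclic C x1 x2 e \<and> x1 * e = e)"
proof -
  obtain a where a: "a \<in> gen (set T)" "C = {b \<in> gen (set T). Neq (gen (set T)) a b}"
    using assms unfolding arch_comps_def by blast
  then obtain y k where y: "a = pw y k" "y \<in> set T" "k > 0"
    by (metis gen_pairwise_absorbingE[OF pairwise_absorbing_T])
  define e where "e = idpow y"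
  have "idpow a = e"
    using idpow_gen_singleton[OF periodic_all] y unfolding e_def gen_singleton by blast
  then have C: "C = (\<Union>z\<in>{z \<in> set T. idpow z = e}. gen {z})" using arch_comp_gen_T a by simp
  show ?thesis
  proof (cases "\<forall>z\<in>set T. idpow z = e \<longrightarrow> z = y")
    case True
    then have "{z \<in> set T. idpow z = e} = {y}" using y(2) e_def by auto
    then show ?thesis using C idx_mod_per_T[OF y(2)] y(2) by auto
  next
    case False
    then obtain u where u: "u \<in> set T" "idpow u = e" "u \<noteq> y" by auto
    then have "{z \<in> set T. idpow z = e} = {y, u}"
      using same_idpow_at_most_two[OF y(2) u(1) u(3)[symmetric]] y(2) e_def by auto
    moreover obtain l h where lh: "{l, h} = {y, u}" "l \<noteq> h" "l * h = l"
    proof (cases "y * u = y")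
      case True
      then show ?thesis using that[of y u] u(3) by auto
    next
      case False
      then have "u * y = u"
        using pairwise_absorbing_T y(2) u(1,3) unfolding pairwise_absorbing_def by metis
      then show ?thesis using that[of u y] u(3) by (auto simp: insert_commute)
    qed
    ultimately have "{z \<in> set T. idpow z = e} = {l, h}" by simp
    then have "C = gen {l} \<union> gen {h}" using C by simp
    moreover have "l \<in> set T" "h \<in> set T" "idpow l = e" "idpow h = e"
      using lh(1) y(2) u(1,2) e_def by (metis insert_iff singletonD)+
    ultimately show ?thesis using ideal_ext_cyclic_gen_pair[OF _ _ lh(2,3)] by blast
  qed
qed

lemma structured_sequence: "structured_sequence T"
proof (intro structured_sequence.intro structured_sequence_axioms.intro)
  show "nonidem_length_sequence T" by (rule nonidem_length_sequence_axioms)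
  show "\<forall>a\<in>gen (set T). \<forall>b\<in>gen (set T). a * b = b * a"
    by (rule commute_gen_pairwise_absorbing[OF pairwise_absorbing_T])
  show "Y_chain (gen (set T))" by (rule Y_chain_gen_pairwise_absorbing[OF pairwise_absorbing_T])
  show "\<forall>x1\<in>gen (set T). \<forall>x2\<in>gen (set T). Nless (gen (set T)) x1 x2 \<longrightarrow> x1 * x2 = x1"
    using Nless_absorbs[OF pairwise_absorbing_T] by blast
qed (use nonidem_subset_gen_T arch_comps_T_cases count_list_T in auto)

end

section \<open>The structure forces idempotent-freeness\<close>

lemma disjoint_if_card_UN_eq_sum:
  assumes "finite S" "\<forall>i\<in>S. finite (A i)" "card (\<Union>i\<in>S. A i) = (\<Sum>i\<in>S. card (A i))"
    and "i \<in> S" "j \<in> S" "i \<noteq> j"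
  shows "A i \<inter> A j = {}"
proof -
  define S' where "S' = S - {i} - {j}"
  have "(\<Sum>k\<in>S. card (A k)) = card (A i) + (\<Sum>k\<in>S - {i}. card (A k))"
    using assms(1,4) by (simp add: sum.remove)
  also have "(\<Sum>k\<in>S - {i}. card (A k)) = card (A j) + (\<Sum>k\<in>S'. card (A k))"
    using assms(1,5,6) sum.remove[of "S - {i}" j "\<lambda>k. card (A k)"] unfolding S'_def by simp
  finally have "(\<Sum>k\<in>S. card (A k)) = card (A i) + card (A j) + (\<Sum>k\<in>S'. card (A k))"
    by simp
  moreover have "card (\<Union>k\<in>S. A k) \<le> card (A i \<union> A j) + (\<Sum>k\<in>S'. card (A k))"
  proof -
    have "(\<Union>k\<in>S. A k) = (A i \<union> A j) \<union> (\<Union>k\<in>S'. A k)" using assms(4,5) S'_def by auto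
    then have "card (\<Union>k\<in>S. A k) \<le> card (A i \<union> A j) + card (\<Union>k\<in>S'. A k)"
      by (metis card_Un_le)
    also have "card (\<Union>k\<in>S'. A k) \<le> (\<Sum>k\<in>S'. card (A k))"
      by (rule card_UN_le) (use assms(1) S'_def in simp)
    finally show ?thesis by simp
  qed
  moreover have "card (A i) + card (A j) = card (A i \<union> A j) + card (A i \<inter> A j)"
    using card_Un_Int assms(2,4,5) by blast
  ultimately have "card (A i \<inter> A j) = 0" using assms(3) by simp
  then show ?thesis using assms(2,4,5) by simp
qed

context structured_sequence
begin

lemma nonidem_if_in_T:
  assumes "y \<in> set T"
  shows "y \<notin> Idem"
proof
  assume "y \<in> Idem"
  then have "count_list T y = 0"
    using count_list_T assms idx_idem[OF \<open>y \<in> Idem\<close>] per_idem[OF \<open>y \<in> Idem\<close>] by simp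
  then show False using assms count_list_0_iff by metis
qed

lemma ideal_ext_cyclic_subset: "ideal_ext_cyclic C x1 x2 e \<Longrightarrow> C \<subseteq> gen {x2} \<union> gen {x1}"
  unfolding ideal_ext_cyclic_def Let_def by blast

lemma in_gen_singleton_T:
  assumes "a \<in> gen (set T)"
  shows "\<exists>x\<in>set T. a \<in> gen {x}"
proof -
  let ?C = "{b \<in> gen (set T). Neq (gen (set T)) a b}"
  have "a \<in> ?C" using in_own_arch_comp[OF assms] by blast
  moreover have "(\<exists>x\<in>set T. ?C = gen {x} \<and> idx x mod per x = 1 mod per x)
      \<or> (\<exists>x1\<in>set T. \<exists>x2\<in>set T. \<exists>e. ideal_ext_cyclic ?C x1 x2 e \<and> x1 * e = e)"
    using arch_comps_cases in_own_arch_comp[OF assms] by blast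
  then show ?thesis
  proof
    assume "\<exists>x1\<in>set T. \<exists>x2\<in>set T. \<exists>e. ideal_ext_cyclic ?C x1 x2 e \<and> x1 * e = e"
    then obtain x1 x2 e where "x1 \<in> set T" "x2 \<in> set T" "ideal_ext_cyclic ?C x1 x2 e" by blast
    then show ?thesis using ideal_ext_cyclic_subset \<open>a \<in> ?C\<close> by blast
  qed (use \<open>a \<in> ?C\<close> in blast)
qed

text \<open>The non-idempotent parts of the \<open>\<langle>x\<rangle>\<close> cover all non-idempotents and have sizes
  \<open>count_list T x\<close>, which add up to exactly their number.\<close>

lemma nonidem_parts_disjoint:
  assumes "y \<in> set T" "z \<in> set T" "y \<noteq> z"
  shows "(gen {y} - Idem) \<inter> (gen {z} - Idem) = {}"
proof (rule disjoint_if_card_UN_eq_sum[where S = "set T" and A = "\<lambda>x. gen {x} - Idem"])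
  have "(\<Union>x\<in>set T. gen {x} - Idem) = UNIV - Idem"
  proof (intro equalityI subsetI)
    fix w :: 'a assume "w \<in> UNIV - Idem"
    then have "w \<in> gen (set T)" using nonidem_subset_gen_T by auto
    then show "w \<in> (\<Union>x\<in>set T. gen {x} - Idem)"
      using in_gen_singleton_T \<open>w \<in> UNIV - Idem\<close> by blast
  qed auto
  then have "card (\<Union>x\<in>set T. gen {x} - Idem) = length T" using length_T by simp
  also have "\<dots> = (\<Sum>x\<in>set T. count_list T x)" using sum_count_set[of T "set T"] by simp
  also have "\<dots> = (\<Sum>x\<in>set T. card (gen {x} - Idem))"
    using count_list_T card_gen_singleton_Diff_Idem[OF periodic_all] by simp
  finally show "card (\<Union>x\<in>set T. gen {x} - Idem) = (\<Sum>x\<in>set T. card (gen {x} - Idem))" .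
qed (use assms finite_gen_singleton[OF periodic_all] in auto)

lemma not_in_gen_singleton_T:
  assumes "y \<in> set T" "z \<in> set T" "y \<noteq> z"
  shows "y \<notin> gen {z}"
  using nonidem_parts_disjoint[OF assms] nonidem_if_in_T[OF assms(1)] gen_base[of y "{y}"] by auto

lemma own_arch_comp_cases:
  assumes "y \<in> set T"
  obtains (cyclic) "{b \<in> gen (set T). Neq (gen (set T)) y b} = gen {y}" "idx y mod per y = 1 mod per y"
  | (extension) x1 x2 e where "x1 \<in> set T" "x2 \<in> set T"
      "ideal_ext_cyclic {b \<in> gen (set T). Neq (gen (set T)) y b} x1 x2 e" "x1 * e = e"
      "y = x1 \<or> y = x2"
proof -
  let ?C = "{b \<in> gen (set T). Neq (gen (set T)) y b}"
  have C: "?C \<in> arch_comps (gen (set T))" "y \<in> ?C"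
    using in_own_arch_comp gen_base[OF assms] by auto
  then have "(\<exists>x\<in>set T. ?C = gen {x} \<and> idx x mod per x = 1 mod per x)
      \<or> (\<exists>x1\<in>set T. \<exists>x2\<in>set T. \<exists>e. ideal_ext_cyclic ?C x1 x2 e \<and> x1 * e = e)"
    using arch_comps_cases by blast
  then consider x where "x \<in> set T" "?C = gen {x}" "idx x mod per x = 1 mod per x"
    | x1 x2 e where "x1 \<in> set T" "x2 \<in> set T" "ideal_ext_cyclic ?C x1 x2 e" "x1 * e = e"
    by blast
  then show ?thesis
  proof cases
    case (1 x)
    then have "y = x" using C(2) not_in_gen_singleton_T assms by blast
    then show ?thesis using cyclic 1 by blast
  next
    case (2 x1 x2 e)
    have "y \<in> gen {x2} \<union> gen {x1}" using ideal_ext_cyclic_subset[OF 2(3)] C(2) by blast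
    then have "y = x1 \<or> y = x2" using not_in_gen_singleton_T assms 2(1,2) by blast
    then show ?thesis using extension 2 by blast
  qed
qed

lemma ideal_ext_cyclic_group: "ideal_ext_cyclic C x1 x2 e \<Longrightarrow> group_with_id (gen {x2}) e"
  unfolding ideal_ext_cyclic_def Let_def by blast

text \<open>Distinct terms in one component are the two generators of an ideal extension, and
  \<open>x1 * x2 = x1 * e * x2 = e * x2 = x2\<close>; terms in different components are comparable, and
  the lower one absorbs.\<close>

lemma pairwise_absorbing_T: "pairwise_absorbing (set T)"
  unfolding pairwise_absorbing_def
proof (intro ballI impI)
  fix y z assume yz: "y \<in> set T" "z \<in> set T" "y \<noteq> z"
  have R: "y \<in> gen (set T)" "z \<in> gen (set T)" using yz gen_base by auto
  then have c: "y * z = z * y" using commute by blast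
  show "y * z = z * y \<and> (y * z = y \<or> y * z = z)"
  proof (cases "Neq (gen (set T)) y z")
    case True
    from yz(1) show ?thesis
    proof (cases rule: own_arch_comp_cases)
      case cyclic
      then show ?thesis using True R not_in_gen_singleton_T[OF yz(2,1)] yz(3) by auto
    next
      case (extension x1 x2 e)
      have "z \<in> gen {x2} \<union> gen {x1}"
        using ideal_ext_cyclic_subset[OF extension(3)] True R by blast
      then have "z = x1 \<or> z = x2" using not_in_gen_singleton_T[OF yz(2)] extension(1,2) by blast
      have "e * x2 = x2"
        using ideal_ext_cyclic_group[OF extension(3)] gen_base[of x2 "{x2}"]
        unfolding group_with_id_def by auto
      then have "x1 * x2 = x2" using extension(4) by (metis mult.assoc)
      moreover have "x2 * x1 = x1 * x2" using commute extension(1,2) gen_base by blast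
      ultimately show ?thesis using c \<open>z = x1 \<or> z = x2\<close> extension(5) yz(3) by auto
    qed
  next
    case False
    then have "Nless (gen (set T)) y z \<or> Nless (gen (set T)) z y"
      using chain R unfolding Y_chain_def Nless_def Neq_def by blast
    then show ?thesis using lower_absorbs R c by auto
  qed
qed

text \<open>The nil generator \<open>x1\<close> of an extension satisfies \<open>x1 ^ (n + 1) = x1 ^ n = e\<close> as soon as
  \<open>x1 ^ n\<close> lies in the group, so it has period 1.\<close>

lemma idx_mod_per_T:
  assumes "m \<in> set T"
  shows "idx m mod per m = 1 mod per m"
  using assms
proof (cases rule: own_arch_comp_cases)
  case cyclic
  then show ?thesis by simp
next
  case (extension x1 x2 e)
  have eG: "e \<in> gen {x2}" and gid: "\<forall>g\<in>gen {x2}. e * g = g \<and> g * e = g"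
    using ideal_ext_cyclic_group[OF extension(3)] unfolding group_with_id_def by auto
  show ?thesis
  proof (cases "m = x2")
    case True
    then show ?thesis
      using idx_eq_1_if_group[OF periodic_all ideal_ext_cyclic_group[OF extension(3)]] by simp
  next
    case False
    then have m: "m = x1" using extension(5) by simp
    obtain n where n: "n > 0" "pw x1 n \<in> gen {x2}"
      using extension(3) unfolding ideal_ext_cyclic_def Let_def by blast
    have "pw x1 j * e = e" if "j > 0" for j
      using that
    proof (induction j rule: nat_induct_non_zero)
      case (Suc j)
      then show ?case using extension(4) pw_Suc_right[OF Suc(1), of x1] by (simp add: mult.assoc)
    qed (simp add: extension(4))
    then have pn: "pw x1 n = e" using gid n by metis
    have "e \<in> gen (set T)" "x1 \<in> gen (set T)"
      using gen_singleton_subset_gen_T[OF extension(2)] eG extension(1) gen_base by auto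
    then have "pw x1 (Suc n) = pw x1 n"
      using pw_Suc_right[OF n(1), of x1] pn extension(4) commute by metis
    then have "Suc n mod per x1 = n mod per x1"
      using pw_eq_pwD[OF periodic_all, of "Suc n" n] n(1) by auto
    then have "per x1 = 1" using mod_eq_dvd_iff_nat[of n "Suc n" "per x1"] by simp
    then show ?thesis using m by simp
  qed
qed

lemma idem_free: "Prods T \<inter> Idem = {}"
proof -
  have "p \<notin> Idem" if p: "p \<in> subprods (mset T)" for p
  proof -
    obtain xs where xs: "p = sprod xs" "xs \<noteq> []" "mset xs \<subseteq># mset T"
      using p unfolding subprods_def by auto
    have "set xs \<subseteq> set T" using set_mset_mono[OF xs(3)] by simp
    then obtain m where m: "m \<in> set xs" "sprod xs = pw m (count_list xs m)"
      using sprod_pairwise_absorbing[OF pairwise_absorbing_T xs(2)] by auto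
    then have mT: "m \<in> set T" using \<open>set xs \<subseteq> set T\<close> by auto
    have "1 \<le> count_list xs m" using m(1) count_list_0_iff[of xs m] by (simp add: Suc_le_eq)
    moreover have "count_list xs m \<le> count_list T m"
      using mset_subset_eq_count[OF xs(3), of m] by (simp add: count_mset)
    ultimately show ?thesis
      using initial_powers_nonidem_iff[OF periodic_all, of m] idx_mod_per_T[OF mT]
        count_list_T mT xs(1) m(2)
      by auto
  qed
  then show ?thesis using Prods_eq_subprods by blast
qed

end

theorem theorem3p2:
  fixes T :: "'a::semigroup_mult list"
  assumes "finite (UNIV - Idem :: 'a set)"
    and "length T = card (UNIV - Idem :: 'a set)"
  shows "Prods T \<inter> Idem = {} \<longleftrightarrow>
    (let R = gen (set T) in
       finite R \<and> (\<forall>a\<in>R. \<forall>b\<in>R. a * b = b * a)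
     \<and> UNIV - R \<subseteq> Idem
     \<and> Y_chain R
     \<and> (\<forall>x1\<in>R. \<forall>x2\<in>R. Nless R x1 x2 \<longrightarrow> x1 * x2 = x1)
     \<and> (\<forall>C\<in>arch_comps R.
          (\<exists>x\<in>set T. C = gen {x} \<and> idx x mod per x = 1 mod per x)
        \<or> (\<exists>x1\<in>set T. \<exists>x2\<in>set T. \<exists>e.
              ideal_ext_cyclic C x1 x2 e \<and> x1 * e = e))
     \<and> (\<forall>x\<in>set T. count_list T x = idx x + per x - 2))"
proof -
  have sequence: "nonidem_length_sequence T" using assms by unfold_locales
  have "finite (gen (set T)) \<and> structured_sequence_axioms T" if "Prods T \<inter> Idem = {}"
  proof -
    interpret idem_free_sequence T using assms that by unfold_locales
    show ?thesis using finite_gen_T structured_sequence by (simp add: structured_sequence_def)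
  qed
  moreover have "Prods T \<inter> Idem = {}" if "structured_sequence_axioms T"
    using sequence that by (intro structured_sequence.idem_free structured_sequence.intro)
  ultimately show ?thesis unfolding structured_sequence_axioms_def Let_def by argo
qed

end
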